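(* There is an absolute constant $K$ such that for all $\gamma\in(0,1)$ and integers $n\ge p\ge2$, $k\ge1$, $b\ge1$ with $k\le n/b$, $$\mathrm{sens}_{k,b}(C_\gamma^{(p)})\le\begin{cases}K\left(\frac{\sqrt k}{\sqrt{1/2-\gamma}}+\sqrt{\frac kb}\cdot\frac{p^\gamma}{\gamma}\right), & 0<\gamma<\tfrac12,\\[2pt] K\left(\sqrt{k\log p}+\sqrt{\frac{kp}{b}}\right), & \gamma=\tfrac12,\\[2pt] K\left(\frac{\sqrt k\,p^{\gamma-1/2}}{\sqrt{(1-\gamma)(\gamma-1/2)}}+\sqrt{\frac kb}\cdot\frac{p^\gamma}{1-\gamma}\right), & \tfrac12<\gamma<1.\end{cases}$$
   Context: $\log$ is the natural logarithm. $(\tilde c_\gamma)_i:=(-1)^i\binom{\gamma}{i}$ with $\binom{\gamma}{i}=\prod_{j=1}^{i}\frac{\gamma+1-j}{j}$. $C_\gamma^{(p)}$ is the inverse of the $n\times n$ lower-triangular Toeplitz matrix whose $r$-th subdiagonal ($r=0$ the main diagonal) equals $(\tilde c_\gamma)_r$ for $r\le p-1$ and $0$ for $r\ge p$. For an $n\times n$ matrix $C$ and integers $k,b\ge1$ with $(k-1)b\le n-1$, $\mathrm{sens}_{k,b}(C):=\bigl\|\sum_{j=0}^{k-1}C_{[\cdot,jb]}\bigr\|_2$, where $C_{[\cdot,m]}$ is the $m$-th column of $C$ with columns indexed from $0$ (the sensitivity under $b$-min-separated participation with at most $k$ participations). *)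

theory Defs
  imports "HOL-Analysis.Analysis" "Jordan_Normal_Form.Matrix"
begin

definition ctilde :: "real \<Rightarrow> nat \<Rightarrow> real" where
  "ctilde \<gamma> i = (-1) ^ i * (\<gamma> gchoose i)"

definition toep :: "real \<Rightarrow> nat \<Rightarrow> nat \<Rightarrow> real mat" where
  "toep \<gamma> p n = mat n n (\<lambda>(i, j). if j \<le> i \<and> i - j < p then ctilde \<gamma> (i - j) else 0)"

definition Cmat :: "real \<Rightarrow> nat \<Rightarrow> nat \<Rightarrow> real mat" where
  "Cmat \<gamma> p n = (THE C. C \<in> carrier_mat n n \<and> inverts_mat (toep \<gamma> p n) C \<and> inverts_mat C (toep \<gamma> p n))"

definition sens :: "nat \<Rightarrow> nat \<Rightarrow> real mat \<Rightarrow> real" where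
  "sens k b C = sqrt (\<Sum>i<dim_row C. (\<Sum>j<k. C $$ (i, j * b))\<^sup>2)"

end

theory Submission
  imports Defs "HOL-Computational_Algebra.Formal_Power_Series"
begin

(* C_gamma^(p) is the lower triangular Toeplitz matrix of the coefficients r_m of 1 / T, where T is
   the power series (1 - X) powr gamma truncated below degree p. Comparing the recurrences of 1 / T
   and of (1 - X) powr (-gamma) gives 0 <= r_m <= (m + 1) powr (gamma - 1). The partial sums of T are
   positive with nondecreasing ratios, so by Kaluza's theorem (1 - X) / T has no positive coefficient
   beyond degree 0, i.e. r is nonincreasing. As r convolved with these partial sums, which are at
   least (1 - gamma) p powr (-gamma), is constantly 1, the r_m sum to at most L = p powr gamma / (1 - gamma).
   For a nonnegative nonincreasing sequence of total mass L, the squared norm of the sum of k columns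
   b apart is at most 2k (sum of r_m^2 + L^2 / b): expand the square through prefix sums, and note that
   a prefix sum along a column exceeds its last term by at most L / b. Finally the sum of r_m^2 is at
   most the power sum over m < p of (m + 1) powr (2 gamma - 2) plus p powr (gamma - 1) L, and the
   three regimes of gamma come from estimating that power sum; K = 4 suffices. *)

lemma powr_le_Bernoulli:
  fixes x s :: real
  assumes "0 < x" "0 \<le> s" "s \<le> 1"
  shows "x powr s \<le> 1 + s * (x - 1)"
  using Youngs_inequality_0[of s "1 - s" x 1] assms by (simp add: algebra_simps)

lemma powr_ge_Bernoulli:
  fixes x s :: real
  assumes "0 < x" "s \<le> 0"
  shows "1 + s * (x - 1) \<le> x powr s"
proof -
  have "s * (x - 1) \<le> s * ln x"
    using ln_le_minus_one[OF assms(1)] assms(2) by (rule mult_left_mono_neg)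
  also have "1 + s * ln x \<le> exp (s * ln x)" by (rule exp_ge_add_one_self)
  finally show ?thesis using assms(1) by (simp add: powr_def mult.commute)
qed

section \<open>Coefficients of (1 - X) powr a\<close>

lemma ctilde_pochhammer: "ctilde a i = pochhammer (-a) i / fact i"
  unfolding ctilde_def gbinomial_pochhammer by (simp add: power_mult_distrib[symmetric])

lemma ctilde_0 [simp]: "ctilde a 0 = 1"
  by (simp add: ctilde_def)

lemma ctilde_Suc: "ctilde a (Suc i) = ctilde a i * (real i - a) / (real i + 1)"
  unfolding ctilde_pochhammer pochhammer_Suc fact_Suc by (simp add: field_simps)

lemma ctilde_neg:
  assumes "0 < a" "a < 1" "0 < i"
  shows "ctilde a i < 0"
  using assms(3)
proof (induction i rule: nat_induct_non_zero)
  case 1 then show ?case using assms by (simp add: ctilde_Suc[of a 0, simplified])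
next
  case (Suc i)
  then have "0 < real i - a" using assms by simp
  with Suc.IH show ?case by (simp add: ctilde_Suc mult_neg_pos divide_neg_pos)
qed

lemma ctilde_pos:
  assumes "a < 0"
  shows "0 < ctilde a i"
  by (induction i) (use assms in \<open>simp_all add: ctilde_Suc\<close>)

lemma ctilde_antimono:
  assumes "-1 \<le> a" "a < 0"
  shows "antimono (ctilde a)"
unfolding antimono_iff_le_Suc
proof
  fix i
  have "(real i - a) / (real i + 1) \<le> 1" using assms by simp
  then show "ctilde a (Suc i) \<le> ctilde a i"
    using ctilde_pos[OF assms(2), of i] mult_left_le[of "(real i - a) / (real i + 1)" "ctilde a i"]
    by (simp add: ctilde_Suc)
qed

lemma sum_ctilde: "(\<Sum>i\<le>m. ctilde a i) = ctilde (a - 1) m"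
  using gbinomial_sum_lower_neg[of a m] by (simp add: ctilde_def mult.commute)

lemma Abs_fps_ctilde_mult: "Abs_fps (ctilde a) * Abs_fps (ctilde b) = Abs_fps (ctilde (a + b))"
proof (rule fps_ext)
  fix n
  have "fps_nth (Abs_fps (ctilde a) * Abs_fps (ctilde b)) n
      = (-1) ^ n * (\<Sum>i=0..n. (a gchoose i) * (b gchoose (n - i)))"
    unfolding fps_mult_nth sum_distrib_left
  proof (intro sum.cong refl)
    fix i assume "i \<in> {0..n}"
    then have "(-1::real) ^ i * (-1) ^ (n - i) = (-1) ^ n" by (simp add: power_add[symmetric])
    then show "fps_nth (Abs_fps (ctilde a)) i * fps_nth (Abs_fps (ctilde b)) (n - i)
        = (-1) ^ n * ((a gchoose i) * (b gchoose (n - i)))"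
      by (simp add: ctilde_def)
  qed
  then show "fps_nth (Abs_fps (ctilde a) * Abs_fps (ctilde b)) n = fps_nth (Abs_fps (ctilde (a + b))) n"
    by (simp add: gbinomial_Vandermonde ctilde_def)
qed

lemma Abs_fps_ctilde_0: "Abs_fps (ctilde 0) = 1"
  by (rule fps_ext) (simp add: ctilde_def gbinomial_0_left)

lemma inverse_Abs_fps_ctilde: "inverse (Abs_fps (ctilde a)) = Abs_fps (ctilde (- a))"
  by (rule fps_inverse_unique) (simp add: Abs_fps_ctilde_mult Abs_fps_ctilde_0)

lemma ctilde_uminus_le_powr:
  assumes "0 < s" "s \<le> 1"
  shows "ctilde (- s) i \<le> real (Suc i) powr (s - 1)"
proof (induction i)
  case 0 then show ?case by simp
next
  case (Suc i)
  have ratio: "(real i + s) / (real i + 1) \<le> (real (Suc (Suc i)) / real (Suc i)) powr (s - 1)"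
    using powr_ge_Bernoulli[of "real (Suc (Suc i)) / real (Suc i)" "s - 1"] assms
    by (simp add: field_simps)
  have "ctilde (- s) (Suc i) = ctilde (- s) i * ((real i + s) / (real i + 1))"
    by (simp add: ctilde_Suc)
  also have "\<dots> \<le> real (Suc i) powr (s - 1) * (real (Suc (Suc i)) / real (Suc i)) powr (s - 1)"
    using Suc.IH ratio assms by (intro mult_mono) (simp_all add: ctilde_pos)
  also have "\<dots> = real (Suc (Suc i)) powr (s - 1)"
    by (simp add: powr_divide)
  finally show ?case .
qed

lemma ctilde_uminus_ge_powr:
  assumes "0 < s" "s \<le> 1" "0 < m"
  shows "s * real m powr (s - 1) \<le> ctilde (- s) m"
  using assms(3)
proof (induction m rule: nat_induct_non_zero)
  case 1 then show ?case by (simp add: ctilde_Suc[of _ 0, simplified])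
next
  case (Suc m)
  have "(real m / real (Suc m)) powr (1 - s) \<le> 1 + (1 - s) * (real m / real (Suc m) - 1)"
    using powr_le_Bernoulli[of "real m / real (Suc m)" "1 - s"] assms Suc.hyps by simp
  then have ratio: "(real m / real (Suc m)) powr (1 - s) \<le> (real m + s) / (real m + 1)"
    by (simp add: field_simps)
  have "real (Suc m) powr (s - 1) = real m powr (s - 1) * (real m / real (Suc m)) powr (1 - s)"
    using Suc.hyps by (simp add: powr_divide powr_minus_divide powr_diff)
  then have "s * real (Suc m) powr (s - 1) = s * real m powr (s - 1) * (real m / real (Suc m)) powr (1 - s)"
    by simp
  also have "\<dots> \<le> ctilde (- s) m * ((real m + s) / (real m + 1))"
    using Suc.IH ratio assms by (intro mult_mono) (auto simp: ctilde_pos less_imp_le)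
  also have "\<dots> = ctilde (- s) (Suc m)"
    by (simp add: ctilde_Suc)
  finally show ?case .
qed

section \<open>Reciprocals of power series and Kaluza's theorem\<close>

lemma fps_inverse_nth_recurrence:
  fixes f :: "'a::field fps"
  assumes "fps_nth f 0 = 1" "0 < n"
  shows "fps_nth (inverse f) n = - (\<Sum>i=1..n. fps_nth f i * fps_nth (inverse f) (n - i))"
proof -
  have "fps_nth (f * inverse f) n = 0" using assms by (simp add: inverse_mult_eq_1')
  moreover have "fps_nth (f * inverse f) n
      = fps_nth (inverse f) n + (\<Sum>i=1..n. fps_nth f i * fps_nth (inverse f) (n - i))"
    unfolding fps_mult_nth using assms(1) by (simp add: sum.atLeast_Suc_atMost[of 0 n])
  ultimately show ?thesis by (simp add: eq_neg_iff_add_eq_0)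
qed

lemma fps_inverse_nth_le:
  fixes f h :: "real fps"
  assumes f0: "fps_nth f 0 = 1" and h0: "fps_nth h 0 = 1"
    and f_nonpos: "\<And>i. 0 < i \<Longrightarrow> fps_nth f i \<le> 0"
    and h_le_f: "\<And>i. 0 < i \<Longrightarrow> fps_nth h i \<le> fps_nth f i"
  shows "0 \<le> fps_nth (inverse f) n \<and> fps_nth (inverse f) n \<le> fps_nth (inverse h) n"
proof (induction n rule: less_induct)
  case (less n)
  show ?case
  proof (cases "n = 0")
    case True then show ?thesis using f0 h0 by simp
  next
    case False
    have IH: "0 \<le> fps_nth (inverse f) (n - i)" "fps_nth (inverse f) (n - i) \<le> fps_nth (inverse h) (n - i)"
      if "i \<in> {1..n}" for i
      using less.IH[of "n - i"] that by auto
    have "0 \<le> (\<Sum>i=1..n. - fps_nth f i * fps_nth (inverse f) (n - i))"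
      using IH f_nonpos by (intro sum_nonneg mult_nonneg_nonneg) auto
    moreover have "(\<Sum>i=1..n. - fps_nth f i * fps_nth (inverse f) (n - i))
        \<le> (\<Sum>i=1..n. - fps_nth h i * fps_nth (inverse h) (n - i))"
      using IH f_nonpos h_le_f by (intro sum_mono mult_mono) (auto intro: order_trans[OF h_le_f f_nonpos])
    ultimately show ?thesis
      using False fps_inverse_nth_recurrence[OF f0] fps_inverse_nth_recurrence[OF h0]
      by (simp add: sum_negf)
  qed
qed

lemma ratio_mono_cross_le:
  fixes g :: "nat \<Rightarrow> real"
  assumes pos: "\<And>m. 0 < g m" and ratio_mono: "mono (\<lambda>m. g (Suc m) / g m)" and "k \<le> n"
  shows "g (Suc n - k) * g n \<le> g (Suc n) * g (n - k)"
proof -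
  have "g (Suc (n - k)) / g (n - k) \<le> g (Suc n) / g n"
    using monoD[OF ratio_mono, of "n - k" n] by simp
  then show ?thesis
    using pos[of n] pos[of "n - k"] assms(3) by (simp add: divide_simps Suc_diff_le)
qed

theorem Kaluza:
  fixes G :: "real fps"
  assumes pos: "\<And>m. 0 < fps_nth G m"
    and ratio_mono: "mono (\<lambda>m. fps_nth G (Suc m) / fps_nth G m)"
  shows "fps_nth (inverse G) (Suc n) \<le> 0"
proof (induction n rule: less_induct)
  case (less n)
  define g where "g = fps_nth G"
  define w where "w = fps_nth (inverse G)"
  have conv: "(\<Sum>k=0..m. w k * g (m - k)) = (if m = 0 then 1 else 0)" for m
  proof -
    have "inverse G * G = 1" using pos[of 0] by (intro inverse_mult_eq_1) simp
    then show ?thesis unfolding w_def g_def by (metis fps_mult_nth fps_one_nth)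
  qed
  have w0: "0 < w 0" using pos[of 0] by (simp add: w_def)
  have last: "g 0 * w (Suc n) = - (\<Sum>k=0..n. w k * g (Suc n - k))"
    using conv[of "Suc n"] by (simp add: mult.commute)
  show ?case
  proof (cases "n = 0")
    case True
    then have "g 0 * w (Suc n) < 0" using last w0 pos by (simp add: g_def)
    then show ?thesis using pos[of 0] by (simp add: w_def g_def mult_less_0_iff)
  next
    case False
    have cross: "g (Suc n - k) * g n \<le> g (Suc n) * g (n - k)" if "k \<le> n" for k
      using ratio_mono_cross_le[of g, OF _ _ that] pos ratio_mono by (simp add: g_def)
    have "g n * (g 0 * w (Suc n))
        = g (Suc n) * (\<Sum>k=0..n. w k * g (n - k)) - g n * (\<Sum>k=0..n. w k * g (Suc n - k))"
      using last conv[of n] False by simp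
    also have "\<dots> = (\<Sum>k=0..n. w k * (g (Suc n) * g (n - k) - g (Suc n - k) * g n))"
      by (simp add: sum_distrib_left sum_subtractf[symmetric] algebra_simps)
    also have "\<dots> \<le> 0"
    proof (rule sum_nonpos)
      fix k assume k: "k \<in> {0..n}"
      show "w k * (g (Suc n) * g (n - k) - g (Suc n - k) * g n) \<le> 0"
      proof (cases k)
        case 0 then show ?thesis by simp
      next
        case (Suc k')
        then have "w k \<le> 0" using less.IH[of k'] k by (simp add: w_def)
        then show ?thesis using cross[of k] k by (simp add: mult_nonpos_nonneg)
      qed
    qed
    finally have "(g n * g 0) * w (Suc n) \<le> 0" by (simp add: mult.assoc)
    moreover have "0 < g n * g 0" using pos by (simp add: g_def)
    ultimately have "w (Suc n) \<le> 0" using mult_le_cancel_left_pos[of "g n * g 0" "w (Suc n)" 0] by simp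
    then show ?thesis by (simp add: w_def)
  qed
qed

section \<open>The first column of the inverse banded Toeplitz matrix\<close>

definition band_fps :: "real \<Rightarrow> nat \<Rightarrow> real fps" where
  "band_fps a p = fps_cutoff p (Abs_fps (ctilde a))"

lemma band_fps_nth: "fps_nth (band_fps a p) i = (if i < p then ctilde a i else 0)"
  by (simp add: band_fps_def)

lemma band_fps_partial_sums:
  assumes "0 < p"
  shows "fps_nth (band_fps a p * Abs_fps (\<lambda>_. 1)) m = ctilde (a - 1) (min m (p - 1))"
proof -
  have "fps_nth (band_fps a p * Abs_fps (\<lambda>_. 1)) m = (\<Sum>i\<in>{0..m} \<inter> {..<p}. ctilde a i)"
    by (simp add: fps_mult_nth band_fps_nth sum.inter_restrict)
  also have "{0..m} \<inter> {..<p} = {..min m (p - 1)}" using assms by auto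
  finally show ?thesis by (simp add: sum_ctilde)
qed

context
  fixes \<gamma> :: real and p :: nat
  assumes \<gamma>: "0 < \<gamma>" "\<gamma> < 1" and p: "0 < p"
begin

lemma band_fps_nth_0: "fps_nth (band_fps \<gamma> p) 0 = 1"
  using p by (simp add: band_fps_nth)

lemma inverse_band_fps_nonneg_le:
  "0 \<le> fps_nth (inverse (band_fps \<gamma> p)) m \<and> fps_nth (inverse (band_fps \<gamma> p)) m \<le> ctilde (- \<gamma>) m"
  using fps_inverse_nth_le[OF band_fps_nth_0, of "Abs_fps (ctilde \<gamma>)" m] ctilde_neg[OF \<gamma>]
  by (simp add: band_fps_nth inverse_Abs_fps_ctilde less_imp_le)

lemma inverse_band_fps_nonneg: "0 \<le> fps_nth (inverse (band_fps \<gamma> p)) m"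
  using inverse_band_fps_nonneg_le by blast

lemma inverse_band_fps_le: "fps_nth (inverse (band_fps \<gamma> p)) m \<le> real (Suc m) powr (\<gamma> - 1)"
  using order_trans[OF conjunct2[OF inverse_band_fps_nonneg_le] ctilde_uminus_le_powr[of \<gamma> m]] \<gamma>
  by simp

lemma band_fps_partial_sums_ge:
  "(1 - \<gamma>) * real p powr (- \<gamma>) \<le> fps_nth (band_fps \<gamma> p * Abs_fps (\<lambda>_. 1)) m"
proof -
  have "(1 - \<gamma>) * real p powr (- \<gamma>) \<le> ctilde (\<gamma> - 1) p"
    using ctilde_uminus_ge_powr[of "1 - \<gamma>" p] \<gamma> p by simp
  also have "\<dots> \<le> ctilde (\<gamma> - 1) (min m (p - 1))"
    using ctilde_antimono[of "\<gamma> - 1"] \<gamma> by (simp add: antimonoD)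
  finally show ?thesis by (simp add: band_fps_partial_sums[OF p])
qed

(* The partial sums of band_fps follow ctilde (gamma - 1) up to index p - 1 and stay constant
   afterwards, so their ratios increase to 1 and Kaluza's theorem applies to band_fps / (1 - X). *)
lemma inverse_band_fps_antimono: "antimono (\<lambda>m. fps_nth (inverse (band_fps \<gamma> p)) m)"
proof -
  define G where "G = band_fps \<gamma> p * Abs_fps (\<lambda>_. 1)"
  have G: "fps_nth G m = ctilde (\<gamma> - 1) (min m (p - 1))" for m
    by (simp add: G_def band_fps_partial_sums[OF p])
  have pos: "0 < fps_nth G m" for m
    using \<gamma> by (simp add: G ctilde_pos)
  have ratio: "fps_nth G (Suc m) / fps_nth G m
      = (if Suc m < p then (real m + 1 - \<gamma>) / (real m + 1) else 1)" for m
  proof (cases "Suc m < p")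
    case True
    then have "min (Suc m) (p - 1) = Suc m" "min m (p - 1) = m" by auto
    then show ?thesis using True pos[of m] by (simp add: G ctilde_Suc)
  next
    case False
    then have "min (Suc m) (p - 1) = min m (p - 1)" by simp
    then show ?thesis using False pos[of m] by (simp add: G)
  qed
  have "mono (\<lambda>m. fps_nth G (Suc m) / fps_nth G m)"
    unfolding mono_iff_le_Suc ratio using \<gamma> by (auto simp: field_simps)
  then have "fps_nth (inverse G) (Suc m) \<le> 0" for m
    using Kaluza pos by blast
  moreover have "inverse G = inverse (band_fps \<gamma> p) * (1 - fps_X)"
    by (simp add: G_def fps_inverse_mult fps_inverse_gp')
  ultimately show ?thesis
    by (simp add: antimono_iff_le_Suc algebra_simps)
qed

lemma inverse_band_fps_sum_le: "(\<Sum>m<N. fps_nth (inverse (band_fps \<gamma> p)) m) \<le> real p powr \<gamma> / (1 - \<gamma>)"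
proof (cases N)
  case 0 then show ?thesis using \<gamma> by simp
next
  case (Suc n)
  define G where "G = band_fps \<gamma> p * Abs_fps (\<lambda>_. 1)"
  define c where "c = (1 - \<gamma>) * real p powr (- \<gamma>)"
  have "inverse (band_fps \<gamma> p) * G = Abs_fps (\<lambda>_. 1)"
    using band_fps_nth_0 by (simp add: G_def mult.assoc[symmetric] inverse_mult_eq_1)
  then have conv: "(\<Sum>k=0..n. fps_nth (inverse (band_fps \<gamma> p)) k * fps_nth G (n - k)) = 1"
    by (metis fps_mult_nth fps_nth_Abs_fps)
  have "c * (\<Sum>m<N. fps_nth (inverse (band_fps \<gamma> p)) m)
      = (\<Sum>k=0..n. fps_nth (inverse (band_fps \<gamma> p)) k * c)"
    using Suc by (simp add: sum_distrib_left mult.commute atLeast0AtMost lessThan_Suc_atMost)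
  also have "\<dots> \<le> 1"
    unfolding conv[symmetric] using band_fps_partial_sums_ge
    by (intro sum_mono mult_left_mono inverse_band_fps_nonneg) (simp add: G_def c_def)
  finally show ?thesis
    using \<gamma> p by (simp add: c_def powr_minus field_simps)
qed

lemma inverse_band_fps_sum_square_le:
  assumes "p \<le> n"
  shows "(\<Sum>m<n. (fps_nth (inverse (band_fps \<gamma> p)) m)\<^sup>2)
    \<le> (\<Sum>m<p. real (Suc m) powr (2 * \<gamma> - 2)) + real p powr (2 * \<gamma> - 1) / (1 - \<gamma>)"
proof -
  let ?r = "\<lambda>m. fps_nth (inverse (band_fps \<gamma> p)) m"
  have head: "(?r m)\<^sup>2 \<le> real (Suc m) powr (2 * \<gamma> - 2)" for m
  proof -
    have "(?r m)\<^sup>2 \<le> (real (Suc m) powr (\<gamma> - 1))\<^sup>2"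
      using inverse_band_fps_le inverse_band_fps_nonneg by (intro power_mono)
    then show ?thesis by (simp add: power2_eq_square powr_add[symmetric])
  qed
  have tail: "(?r m)\<^sup>2 \<le> real p powr (\<gamma> - 1) * ?r m" if "p \<le> m" for m
  proof -
    have "?r m \<le> real p powr (\<gamma> - 1)"
      using inverse_band_fps_le[of m] powr_mono2'[of "\<gamma> - 1" "real p" "real (Suc m)"] \<gamma> p that
      by simp
    then show ?thesis
      using inverse_band_fps_nonneg[of m] by (simp add: power2_eq_square mult_right_mono)
  qed
  have "(\<Sum>m<n. (?r m)\<^sup>2) = (\<Sum>m<p. (?r m)\<^sup>2) + (\<Sum>m=p..<n. (?r m)\<^sup>2)"
    using sum.atLeastLessThan_concat[of 0 p n "\<lambda>m. (?r m)\<^sup>2"] assms by (simp add: atLeast0LessThan)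
  also have "\<dots> \<le> (\<Sum>m<p. real (Suc m) powr (2 * \<gamma> - 2)) + real p powr (\<gamma> - 1) * (\<Sum>m=p..<n. ?r m)"
    unfolding sum_distrib_left using head tail by (intro add_mono sum_mono) auto
  also have "(\<Sum>m=p..<n. ?r m) \<le> (\<Sum>m<n. ?r m)"
    using inverse_band_fps_nonneg by (intro sum_mono2) auto
  also have "\<dots> \<le> real p powr \<gamma> / (1 - \<gamma>)"
    by (rule inverse_band_fps_sum_le)
  also have "real p powr (\<gamma> - 1) * (real p powr \<gamma> / (1 - \<gamma>)) = real p powr (2 * \<gamma> - 1) / (1 - \<gamma>)"
    by (simp add: powr_add[symmetric])
  finally show ?thesis by (simp add: mult_left_mono)
qed

end

section \<open>Lower triangular Toeplitz matrices\<close>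

definition lower_toeplitz :: "nat \<Rightarrow> 'a::zero fps \<Rightarrow> 'a mat" where
  "lower_toeplitz n f = mat n n (\<lambda>(i, j). if j \<le> i then fps_nth f (i - j) else 0)"

lemma lower_toeplitz_carrier [simp]: "lower_toeplitz n f \<in> carrier_mat n n"
  by (simp add: lower_toeplitz_def)

lemma lower_toeplitz_mult:
  fixes f g :: "'a::comm_semiring_1 fps"
  shows "lower_toeplitz n f * lower_toeplitz n g = lower_toeplitz n (f * g)"
proof (rule eq_matI)
  fix i j assume "i < dim_row (lower_toeplitz n (f * g))" "j < dim_col (lower_toeplitz n (f * g))"
  then have ij: "i < n" "j < n" by (auto simp: lower_toeplitz_def)
  have "(lower_toeplitz n f * lower_toeplitz n g) $$ (i, j)
      = (\<Sum>l\<in>{0..<n}. (if l \<le> i then fps_nth f (i - l) else 0) * (if j \<le> l then fps_nth g (l - j) else 0))"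
    using ij by (simp add: lower_toeplitz_def scalar_prod_def)
  also have "\<dots> = (\<Sum>l\<in>{0..<n}. if l \<in> {j..i} then fps_nth f (i - l) * fps_nth g (l - j) else 0)"
    by (intro sum.cong) auto
  also have "\<dots> = (\<Sum>l\<in>{0..<n} \<inter> {j..i}. fps_nth f (i - l) * fps_nth g (l - j))"
    by (simp add: sum.inter_restrict)
  also have "{0..<n} \<inter> {j..i} = {j..i}" using ij by auto
  also have "(\<Sum>l\<in>{j..i}. fps_nth f (i - l) * fps_nth g (l - j))
      = (if j \<le> i then fps_nth (f * g) (i - j) else 0)"
  proof (cases "j \<le> i")
    case True
    have "(\<Sum>l\<in>{j..i}. fps_nth f (i - l) * fps_nth g (l - j))
        = (\<Sum>s=0..i-j. fps_nth f (i - j - s) * fps_nth g s)"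
      using True by (intro sum.reindex_bij_witness[of _ "\<lambda>s. s + j" "\<lambda>l. l - j"]) auto
    also have "\<dots> = (\<Sum>s=0..i-j. fps_nth f s * fps_nth g (i - j - s))"
      using True by (subst sum.atLeastAtMost_rev) (auto intro!: sum.cong)
    also have "\<dots> = fps_nth (f * g) (i - j)"
      by (simp only: fps_mult_nth)
    finally show ?thesis using True by simp
  qed simp
  finally show "(lower_toeplitz n f * lower_toeplitz n g) $$ (i, j) = lower_toeplitz n (f * g) $$ (i, j)"
    using ij by (simp add: lower_toeplitz_def)
qed (auto simp: lower_toeplitz_def)

lemma lower_toeplitz_1: "lower_toeplitz n 1 = 1\<^sub>m n"
  by (rule eq_matI) (auto simp: lower_toeplitz_def)

lemma lower_toeplitz_inverse:
  fixes f :: "'a::field fps"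
  assumes "fps_nth f 0 \<noteq> 0"
  shows "lower_toeplitz n f * lower_toeplitz n (inverse f) = 1\<^sub>m n"
    and "lower_toeplitz n (inverse f) * lower_toeplitz n f = 1\<^sub>m n"
  using assms by (simp_all add: lower_toeplitz_mult lower_toeplitz_1 inverse_mult_eq_1 inverse_mult_eq_1')

lemma toep_eq_lower_toeplitz: "toep \<gamma> p n = lower_toeplitz n (band_fps \<gamma> p)"
  by (rule eq_matI) (auto simp: toep_def lower_toeplitz_def band_fps_nth)

lemma Cmat_eq_lower_toeplitz:
  assumes "0 < p"
  shows "Cmat \<gamma> p n = lower_toeplitz n (inverse (band_fps \<gamma> p))"
  unfolding Cmat_def toep_eq_lower_toeplitz
proof (rule the_equality)
  have "fps_nth (band_fps \<gamma> p) 0 \<noteq> 0" using assms by (simp add: band_fps_nth)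
  note inv = lower_toeplitz_inverse[OF this, of n]
  then show "lower_toeplitz n (inverse (band_fps \<gamma> p)) \<in> carrier_mat n n
      \<and> inverts_mat (lower_toeplitz n (band_fps \<gamma> p)) (lower_toeplitz n (inverse (band_fps \<gamma> p)))
      \<and> inverts_mat (lower_toeplitz n (inverse (band_fps \<gamma> p))) (lower_toeplitz n (band_fps \<gamma> p))"
    by (simp add: inverts_mat_def lower_toeplitz_def)
  fix C assume C: "C \<in> carrier_mat n n \<and> inverts_mat (lower_toeplitz n (band_fps \<gamma> p)) C
      \<and> inverts_mat C (lower_toeplitz n (band_fps \<gamma> p))"
  then have CT: "C * lower_toeplitz n (band_fps \<gamma> p) = 1\<^sub>m n" by (auto simp: inverts_mat_def)
  have "C = C * (lower_toeplitz n (band_fps \<gamma> p) * lower_toeplitz n (inverse (band_fps \<gamma> p)))"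
    using C by (auto simp: inv)
  also have "\<dots> = (C * lower_toeplitz n (band_fps \<gamma> p)) * lower_toeplitz n (inverse (band_fps \<gamma> p))"
    using C by (simp add: assoc_mult_mat[of C n n _ n _ n])
  also have "\<dots> = lower_toeplitz n (inverse (band_fps \<gamma> p))"
    unfolding CT by (rule left_mult_one_mat[OF lower_toeplitz_carrier])
  finally show "C = lower_toeplitz n (inverse (band_fps \<gamma> p))" .
qed

lemma sens_lower_toeplitz:
  assumes "\<And>j. j < k \<Longrightarrow> j * b < n"
  shows "sens k b (lower_toeplitz n f)
    = sqrt (\<Sum>i<n. (\<Sum>j<k. if j * b \<le> i then fps_nth f (i - j * b) else 0)\<^sup>2)"
  unfolding sens_def using assms by (simp add: lower_toeplitz_def)

section \<open>Sums of strided columns\<close>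

lemma power2_sum_le_prefix_sums:
  fixes x :: "nat \<Rightarrow> real"
  assumes "\<And>j. 0 \<le> x j"
  shows "(\<Sum>j<k. x j)\<^sup>2 \<le> 2 * (\<Sum>j<k. x j * (\<Sum>i\<le>j. x i))"
proof (induction k)
  case 0 then show ?case by simp
next
  case (Suc k)
  have "(\<Sum>j<Suc k. x j)\<^sup>2 = (\<Sum>j<k. x j)\<^sup>2 + 2 * x k * (\<Sum>j<k. x j) + (x k)\<^sup>2"
    by (simp add: power2_eq_square algebra_simps)
  also have "\<dots> \<le> 2 * (\<Sum>j<k. x j * (\<Sum>i\<le>j. x i)) + 2 * x k * (\<Sum>j<k. x j) + 2 * (x k)\<^sup>2"
    using Suc.IH zero_le_power2[of "x k"] by linarith
  also have "\<dots> = 2 * (\<Sum>j<Suc k. x j * (\<Sum>i\<le>j. x i))"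
    by (simp add: lessThan_Suc_atMost[symmetric] power2_eq_square algebra_simps)
  finally show ?case .
qed

lemma sum_shifted_le:
  fixes \<psi> :: "nat \<Rightarrow> real"
  assumes "\<And>m. 0 \<le> \<psi> m"
  shows "(\<Sum>i<n. if c \<le> i then \<psi> (i - c) else 0) \<le> (\<Sum>m<n. \<psi> m)"
proof -
  have "(\<Sum>i<n. if c \<le> i then \<psi> (i - c) else 0) = (\<Sum>i\<in>{..<n} \<inter> {c..}. \<psi> (i - c))"
    by (simp add: sum.inter_restrict)
  also have "\<dots> = (\<Sum>m\<in>(\<lambda>i. i - c) ` ({..<n} \<inter> {c..}). \<psi> m)"
    by (rule sum.reindex[symmetric, unfolded comp_def]) (auto simp: inj_on_def)
  also have "\<dots> \<le> (\<Sum>m<n. \<psi> m)"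
    using assms by (intro sum_mono2) auto
  finally show ?thesis .
qed

context
  fixes r :: "nat \<Rightarrow> real" and L :: real
  assumes antimono: "antimono r" and nonneg: "\<And>m. 0 \<le> r m"
    and sum_le: "\<And>N. (\<Sum>m<N. r m) \<le> L"
begin

lemma antimono_sum_stride_le:
  assumes "0 < b"
  shows "(\<Sum>d\<le>j. r (m + d * b)) \<le> r m + L / b"
proof -
  have blocks: "real b * (\<Sum>d<j. r (m + Suc d * b)) \<le> (\<Sum>t\<in>{Suc m..<Suc m + j * b}. r t)" for j
  proof (induction j)
    case 0 then show ?case by simp
  next
    case (Suc j)
    have "real b * r (m + Suc j * b) \<le> (\<Sum>t\<in>{Suc m + j * b..<Suc m + Suc j * b}. r t)"
      using sum_bounded_below[of "{Suc m + j * b..<Suc m + Suc j * b}" "r (m + Suc j * b)" r]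
      by (simp add: antimonoD[OF antimono])
    moreover have "(\<Sum>t\<in>{Suc m..<Suc m + j * b}. r t) + (\<Sum>t\<in>{Suc m + j * b..<Suc m + Suc j * b}. r t)
        = (\<Sum>t\<in>{Suc m..<Suc m + Suc j * b}. r t)"
      by (rule sum.atLeastLessThan_concat) auto
    ultimately show ?case using Suc.IH by (simp add: algebra_simps)
  qed
  have "(\<Sum>t\<in>{Suc m..<Suc m + j * b}. r t) \<le> (\<Sum>t<Suc m + j * b. r t)"
    using nonneg by (intro sum_mono2) auto
  then have "real b * (\<Sum>d<j. r (m + Suc d * b)) \<le> L"
    using blocks[of j] sum_le[of "Suc m + j * b"] by linarith
  then have "(\<Sum>d<j. r (m + Suc d * b)) \<le> L / b"
    using assms by (simp add: pos_le_divide_eq mult.commute)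
  moreover have "(\<Sum>d\<le>j. r (m + d * b)) = r m + (\<Sum>d<j. r (m + Suc d * b))"
    unfolding lessThan_Suc_atMost[symmetric] sum.lessThan_Suc_shift by simp
  ultimately show ?thesis by linarith
qed

lemma strided_prefix_sum_le:
  assumes "0 < b" "j * b \<le> i"
  shows "(\<Sum>j'\<le>j. if j' * b \<le> i then r (i - j' * b) else 0) \<le> r (i - j * b) + L / b"
proof -
  have "(\<Sum>j'\<le>j. if j' * b \<le> i then r (i - j' * b) else 0)
      = (\<Sum>d\<le>j. if (j - d) * b \<le> i then r (i - (j - d) * b) else 0)"
    by (rule sum.reindex_bij_witness[of _ "\<lambda>d. j - d" "\<lambda>d. j - d"]) auto
  also have "\<dots> = (\<Sum>d\<le>j. r (i - j * b + d * b))"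
  proof (intro sum.cong refl)
    fix d assume "d \<in> {..j}"
    then have "d * b \<le> j * b" "(j - d) * b = j * b - d * b" by (simp_all add: diff_mult_distrib)
    then show "(if (j - d) * b \<le> i then r (i - (j - d) * b) else 0) = r (i - j * b + d * b)"
      using assms(2) by simp
  qed
  also have "\<dots> \<le> r (i - j * b) + L / b"
    by (rule antimono_sum_stride_le[OF assms(1)])
  finally show ?thesis .
qed

lemma strided_sum_square_le:
  assumes "0 < b"
  shows "(\<Sum>i<n. (\<Sum>j<k. if j * b \<le> i then r (i - j * b) else 0)\<^sup>2)
    \<le> 2 * k * ((\<Sum>m<n. (r m)\<^sup>2) + L\<^sup>2 / b)"
proof -
  define x where "x i j = (if j * b \<le> i then r (i - j * b) else 0)" for i j
  define \<psi> where "\<psi> m = r m * (r m + L / b)" for m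
  have L: "0 \<le> L" using sum_le[of 0] by simp
  have \<psi>: "0 \<le> \<psi> m" for m using nonneg[of m] L by (simp add: \<psi>_def)
  have row: "(\<Sum>j<k. x i j)\<^sup>2 \<le> 2 * (\<Sum>j<k. if j * b \<le> i then \<psi> (i - j * b) else 0)" for i
  proof -
    have "(\<Sum>j<k. x i j)\<^sup>2 \<le> 2 * (\<Sum>j<k. x i j * (\<Sum>j'\<le>j. x i j'))"
      by (rule power2_sum_le_prefix_sums) (simp add: x_def nonneg)
    also have "\<dots> \<le> 2 * (\<Sum>j<k. if j * b \<le> i then \<psi> (i - j * b) else 0)"
      using strided_prefix_sum_le[OF assms] nonneg
      by (intro mult_left_mono sum_mono) (auto simp: x_def \<psi>_def mult_left_mono)
    finally show ?thesis .
  qed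
  have "(\<Sum>i<n. (\<Sum>j<k. x i j)\<^sup>2) \<le> 2 * (\<Sum>j<k. \<Sum>i<n. if j * b \<le> i then \<psi> (i - j * b) else 0)"
    using sum_mono[where K = "{..<n}", OF row] by (simp add: sum_distrib_left sum.swap[of _ "{..<k}"])
  also have "\<dots> \<le> 2 * (\<Sum>j<k. \<Sum>m<n. \<psi> m)"
    by (intro mult_left_mono sum_mono sum_shifted_le \<psi>) auto
  also have "\<dots> = 2 * k * (\<Sum>m<n. \<psi> m)"
    by simp
  also have "(\<Sum>m<n. \<psi> m) = (\<Sum>m<n. (r m)\<^sup>2) + L / b * (\<Sum>m<n. r m)"
    by (simp add: \<psi>_def sum.distrib sum_distrib_left sum_divide_distrib power2_eq_square algebra_simps)
  also have "\<dots> \<le> (\<Sum>m<n. (r m)\<^sup>2) + L\<^sup>2 / b"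
    using mult_left_mono[OF sum_le[of n], of "L / b"] L by (simp add: power2_eq_square)
  finally show ?thesis unfolding x_def by (simp add: mult_left_mono)
qed

end

section \<open>The sensitivity bound\<close>

lemma powr_le_diff_powr_div:
  fixes x s :: real
  assumes "1 < x" "s \<noteq> 0" "s < 1"
  shows "x powr (s - 1) \<le> (x powr s - (x - 1) powr s) / s"
proof -
  define y where "y = (x - 1) / x"
  have y: "0 < y" "s * (y - 1) = - s / x" using assms by (simp_all add: y_def field_simps)
  have split: "(x - 1) powr s = x powr s * y powr s"
    using assms by (simp add: y_def powr_divide)
  have xs: "x powr (s - 1) = x powr s / x"
    using assms by (simp add: powr_diff)
  show ?thesis
  proof (cases "0 < s")
    case True
    have "y powr s \<le> 1 - s / x" using powr_le_Bernoulli[of y s] y True assms by simp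
    then have "(x - 1) powr s \<le> x powr s * (1 - s / x)" unfolding split by (simp add: mult_left_mono)
    then show ?thesis using True xs by (simp add: field_simps)
  next
    case False
    have "1 - s / x \<le> y powr s" using powr_ge_Bernoulli[of y s] y False by simp
    then have "x powr s * (1 - s / x) \<le> (x - 1) powr s" unfolding split by (simp add: mult_left_mono)
    then have "x powr s - (x - 1) powr s \<le> s * x powr (s - 1)" unfolding xs by (simp add: algebra_simps)
    then show ?thesis using False assms by (simp add: neg_le_divide_eq mult.commute)
  qed
qed

lemma sum_powr_le:
  fixes s :: real
  assumes "s \<noteq> 0" "s < 1" "0 < N"
  shows "(\<Sum>m<N. real (Suc m) powr (s - 1)) \<le> 1 + (real N powr s - 1) / s"
  using assms(3)
proof (induction N rule: nat_induct_non_zero)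
  case 1 then show ?case by simp
next
  case (Suc N)
  have "real (Suc N) powr (s - 1) \<le> (real (Suc N) powr s - real N powr s) / s"
    using powr_le_diff_powr_div[OF _ assms(1,2), of "real (Suc N)"] Suc.hyps by simp
  then show ?case using Suc.IH by (simp add: diff_divide_distrib)
qed

lemma sum_inverse_le_1_plus_ln:
  assumes "0 < N"
  shows "(\<Sum>m<N. real (Suc m) powr (- 1)) \<le> 1 + ln (real N)"
  using euler_mascheroni_sequence_decreasing[of 1 N] assms
  by (simp add: harm_altdef powr_minus_divide divide_inverse)

lemma sens_Cmat_le:
  assumes \<gamma>: "0 < \<gamma>" "\<gamma> < 1" and p: "0 < p" "p \<le> n" and b: "0 < b" "k * b \<le> n"
  shows "sens k b (Cmat \<gamma> p n)
    \<le> sqrt (2 * k * ((\<Sum>m<p. real (Suc m) powr (2 * \<gamma> - 2)) + real p powr (2 * \<gamma> - 1) / (1 - \<gamma>)))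
      + sqrt (2 * (k / b) * (real p powr \<gamma> / (1 - \<gamma>))\<^sup>2)"
proof -
  let ?r = "\<lambda>m. fps_nth (inverse (band_fps \<gamma> p)) m"
  define Q where "Q = (\<Sum>m<p. real (Suc m) powr (2 * \<gamma> - 2)) + real p powr (2 * \<gamma> - 1) / (1 - \<gamma>)"
  define L where "L = real p powr \<gamma> / (1 - \<gamma>)"
  have Q: "0 \<le> Q" using \<gamma> by (simp add: Q_def sum_nonneg)
  have "j * b < n" if "j < k" for j
    using that b by (meson mult_less_mono1 order_less_le_trans)
  then have "sens k b (Cmat \<gamma> p n) = sqrt (\<Sum>i<n. (\<Sum>j<k. if j * b \<le> i then ?r (i - j * b) else 0)\<^sup>2)"
    by (simp add: Cmat_eq_lower_toeplitz[OF p(1)] sens_lower_toeplitz)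
  also have "\<dots> \<le> sqrt (2 * k * ((\<Sum>m<n. (?r m)\<^sup>2) + L\<^sup>2 / b))"
    using strided_sum_square_le[OF inverse_band_fps_antimono inverse_band_fps_nonneg
        inverse_band_fps_sum_le b(1)] \<gamma> p(1) by (simp add: L_def)
  also have "\<dots> \<le> sqrt (2 * k * (Q + L\<^sup>2 / b))"
    using inverse_band_fps_sum_square_le[OF \<gamma> p]
    by (intro real_sqrt_le_mono mult_left_mono add_right_mono) (simp_all add: Q_def)
  also have "\<dots> \<le> sqrt (2 * k * Q) + sqrt (2 * (k / b) * L\<^sup>2)"
    using sqrt_add_le_add_sqrt[of "2 * k * Q" "2 * (k / b) * L\<^sup>2"] Q by (simp add: distrib_left)
  finally show ?thesis by (simp add: Q_def L_def)
qed

lemma sqrt_two_mult_le: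
  fixes x y c :: real
  assumes "x \<le> 8 * y\<^sup>2" "0 \<le> y" "0 \<le> c"
  shows "sqrt (2 * c * x) \<le> 4 * (sqrt c * y)"
proof (rule real_le_lsqrt)
  show "2 * c * x \<le> (4 * (sqrt c * y))\<^sup>2"
    using mult_left_mono[OF assms(1), of "2 * c"] assms(3) by (simp add: power_mult_distrib)
qed (use assms in simp)

lemma sens_Cmat_le_lt:
  assumes \<gamma>: "0 < \<gamma>" "\<gamma> < 1/2" and p: "0 < p" "p \<le> n" and b: "0 < b" "k * b \<le> n"
  shows "sens k b (Cmat \<gamma> p n)
    \<le> 4 * (sqrt k / sqrt (1/2 - \<gamma>) + sqrt (real k / real b) * (real p powr \<gamma> / \<gamma>))"
proof -
  define D where "D = 1/2 - \<gamma>"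
  have D: "0 < D" "1 \<le> 1 / (2 * D)" using \<gamma> by (simp_all add: D_def)
  have "(\<Sum>m<p. real (Suc m) powr (2 * \<gamma> - 2)) \<le> 1 + (real p powr (2 * \<gamma> - 1) - 1) / (2 * \<gamma> - 1)"
    using sum_powr_le[of "2 * \<gamma> - 1" p] \<gamma> p by (simp add: algebra_simps)
  also have "\<dots> = 1 + (1 - real p powr (2 * \<gamma> - 1)) / (2 * D)"
    by (simp add: D_def) (metis minus_diff_eq minus_divide_divide)
  also have "\<dots> \<le> 1 + 1 / (2 * D)"
    using D by (simp add: divide_right_mono)
  finally have head: "(\<Sum>m<p. real (Suc m) powr (2 * \<gamma> - 2)) \<le> 1 + 1 / (2 * D)" .
  have "real p powr (2 * \<gamma> - 1) \<le> 1"
    using powr_mono[of "2 * \<gamma> - 1" 0 "real p"] \<gamma> p by simp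
  then have tail: "real p powr (2 * \<gamma> - 1) / (1 - \<gamma>) \<le> 2"
    using \<gamma> by (simp add: divide_simps)
  have "(\<Sum>m<p. real (Suc m) powr (2 * \<gamma> - 2)) + real p powr (2 * \<gamma> - 1) / (1 - \<gamma>)
      \<le> 4 * (1 / (2 * D))"
    using head tail D by linarith
  also have "\<dots> \<le> 8 * (1 / sqrt D)\<^sup>2"
    using D by (simp add: power_divide divide_right_mono)
  finally have "sqrt (2 * real k * ((\<Sum>m<p. real (Suc m) powr (2 * \<gamma> - 2)) + real p powr (2 * \<gamma> - 1) / (1 - \<gamma>)))
      \<le> 4 * (sqrt k * (1 / sqrt D))"
    by (rule sqrt_two_mult_le) (use D in simp_all)
  moreover have "(real p powr \<gamma> / (1 - \<gamma>))\<^sup>2 \<le> 8 * (real p powr \<gamma> / \<gamma>)\<^sup>2"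
    using \<gamma> by (simp add: power_divide divide_simps power2_eq_square mult_mono)
  then have "sqrt (2 * (real k / real b) * (real p powr \<gamma> / (1 - \<gamma>))\<^sup>2) \<le> 4 * (sqrt (real k / real b) * (real p powr \<gamma> / \<gamma>))"
    by (rule sqrt_two_mult_le) (use \<gamma> in simp_all)
  ultimately show ?thesis
    using sens_Cmat_le[of \<gamma> p n b k] \<gamma> p b by (simp add: D_def)
qed

lemma sens_Cmat_le_half:
  assumes p: "2 \<le> p" "p \<le> n" and b: "0 < b" "k * b \<le> n"
  shows "sens k b (Cmat (1/2) p n)
    \<le> 4 * (sqrt (real k * ln (real p)) + sqrt (real k * real p / real b))"
proof -
  have ln: "2/3 \<le> ln (real p)"
  proof -
    have "ln 2 \<le> ln (real p)" using p by simp
    then show ?thesis using ln2_ge_two_thirds by linarith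
  qed
  have "(\<Sum>m<p. real (Suc m) powr (2 * (1/2) - 2)) + real p powr (2 * (1/2) - 1) / (1 - 1/2)
      \<le> 1 + ln (real p) + 2"
    using sum_inverse_le_1_plus_ln[of p] p by simp
  also have "\<dots> \<le> 8 * (sqrt (ln (real p)))\<^sup>2"
    using ln by simp
  finally have "sqrt (2 * real k * ((\<Sum>m<p. real (Suc m) powr (2 * (1/2) - 2))
      + real p powr (2 * (1/2) - 1) / (1 - 1/2))) \<le> 4 * (sqrt k * sqrt (ln (real p)))"
    by (rule sqrt_two_mult_le) (use ln in simp_all)
  moreover have "(real p powr (1/2) / (1 - 1/2))\<^sup>2 \<le> 8 * (sqrt (real p))\<^sup>2"
    by (simp add: powr_half_sqrt power_divide)
  then have "sqrt (2 * (real k / real b) * (real p powr (1/2) / (1 - 1/2))\<^sup>2)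
      \<le> 4 * (sqrt (real k / real b) * sqrt (real p))"
    by (rule sqrt_two_mult_le) simp_all
  ultimately show ?thesis
    using sens_Cmat_le[of "1/2" p n b k] p b by (simp add: real_sqrt_mult real_sqrt_divide)
qed

lemma sens_Cmat_le_gt:
  assumes \<gamma>: "1/2 < \<gamma>" "\<gamma> < 1" and p: "0 < p" "p \<le> n" and b: "0 < b" "k * b \<le> n"
  shows "sens k b (Cmat \<gamma> p n)
    \<le> 4 * (sqrt k * real p powr (\<gamma> - 1/2) / sqrt ((1 - \<gamma>) * (\<gamma> - 1/2))
      + sqrt (real k / real b) * (real p powr \<gamma> / (1 - \<gamma>)))"
proof -
  define E where "E = (1 - \<gamma>) * (\<gamma> - 1/2)"
  define q where "q = real p powr (2 * \<gamma> - 1)"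
  have E: "0 < E" using \<gamma> by (simp add: E_def)
  have q: "0 \<le> q" by (simp add: q_def)
  have E2: "2 * E = (2 * \<gamma> - 1) * (1 - \<gamma>)" by (simp add: E_def field_simps)
  have "(\<Sum>m<p. real (Suc m) powr (2 * \<gamma> - 2)) \<le> 1 + (q - 1) / (2 * \<gamma> - 1)"
    using sum_powr_le[of "2 * \<gamma> - 1" p] \<gamma> p by (simp add: q_def algebra_simps)
  also have "\<dots> \<le> q / (2 * \<gamma> - 1)"
    using \<gamma> by (simp add: diff_divide_distrib)
  finally have "(\<Sum>m<p. real (Suc m) powr (2 * \<gamma> - 2)) + q / (1 - \<gamma>) \<le> q / (2 * \<gamma> - 1) + q / (1 - \<gamma>)"
    by simp
  also have "\<dots> = q * \<gamma> / ((2 * \<gamma> - 1) * (1 - \<gamma>))"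
    using \<gamma> by (simp add: field_simps)
  also have "\<dots> = q * \<gamma> / (2 * E)"
    by (simp only: E2)
  also have "q * \<gamma> / (2 * E) \<le> 8 * (q / E)"
    using \<gamma> E q mult_left_mono[of \<gamma> 16 q] by (simp add: field_simps)
  also have "q / E = (real p powr (\<gamma> - 1/2) / sqrt E)\<^sup>2"
    using E by (simp add: q_def power_divide power2_eq_square powr_add[symmetric])
  finally have "sqrt (2 * real k * ((\<Sum>m<p. real (Suc m) powr (2 * \<gamma> - 2)) + q / (1 - \<gamma>)))
      \<le> 4 * (sqrt k * (real p powr (\<gamma> - 1/2) / sqrt E))"
    by (rule sqrt_two_mult_le) (use E in simp_all)
  moreover have "sqrt (2 * (real k / real b) * (real p powr \<gamma> / (1 - \<gamma>))\<^sup>2)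
      \<le> 4 * (sqrt (real k / real b) * (real p powr \<gamma> / (1 - \<gamma>)))"
    by (rule sqrt_two_mult_le) (use \<gamma> in simp_all)
  ultimately show ?thesis
    using sens_Cmat_le[of \<gamma> p n b k] \<gamma> p b by (simp add: E_def q_def)
qed

theorem mainTheorem10:
  shows "\<exists>K::real. \<forall>(\<gamma>::real) (n::nat) (p::nat) (k::nat) (b::nat).
     0 < \<gamma> \<and> \<gamma> < 1 \<and> 2 \<le> p \<and> p \<le> n \<and> 1 \<le> k \<and> 1 \<le> b \<and> real k \<le> real n / real b \<longrightarrow>
     sens k b (Cmat \<gamma> p n) \<le>
       (if \<gamma> < 1/2 then
          K * (sqrt k / sqrt (1/2 - \<gamma>) + sqrt (real k / real b) * (real p powr \<gamma> / \<gamma>))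
        else if \<gamma> = 1/2 then
          K * (sqrt (real k * ln (real p)) + sqrt (real k * real p / real b))
        else
          K * (sqrt k * real p powr (\<gamma> - 1/2) / sqrt ((1 - \<gamma>) * (\<gamma> - 1/2))
               + sqrt (real k / real b) * (real p powr \<gamma> / (1 - \<gamma>))))"
proof (intro exI[of _ 4] allI impI, goal_cases)
  case (1 \<gamma> n p k b)
  then have \<gamma>: "0 < \<gamma>" "\<gamma> < 1" and p: "2 \<le> p" "p \<le> n"
    and b: "0 < b" "real k \<le> real n / real b" by auto
  then have "real (k * b) \<le> real n" by (simp add: pos_le_divide_eq)
  then have kb: "k * b \<le> n" by linarith
  consider (lt) "\<gamma> < 1/2" | (half) "\<gamma> = 1/2" | (gt) "1/2 < \<gamma>" by linarith
  then show ?case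
  proof cases
    case lt with sens_Cmat_le_lt[OF \<gamma>(1) lt _ p(2) b(1) kb] p show ?thesis by simp
  next
    case half show ?thesis using sens_Cmat_le_half[OF p b(1) kb] by (simp add: half)
  next
    case gt with sens_Cmat_le_gt[OF gt \<gamma>(2) _ p(2) b(1) kb] p show ?thesis by simp
  qed
qed

end
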